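(* Let $a,b,c$ be parameters (real or complex numbers) such that no denominator below vanishes, and put $u(n,a,b,c)=\frac{\prod_{j=0}^{n-1}(b+jc)}{\prod_{j=0}^{n-1}(a+jc)}$. Define, for $n\ge0$, $$T(2n)=\frac{(a+(n-1)c)(b+nc)}{(a+2nc)(a+(2n-1)c)},\qquad T(2n+1)=\frac{(n+1)c\,(a-b+nc)}{(a+2nc)(a+(2n+1)c)},$$ and numbers $A(n,k)$ for integers $n\ge0$ and all integers $k$ by $$A(2n,2k)=\binom{n}{k}u(n-k,a+2kc,b+kc,c),\qquad A(2n+1,2k+1)=\binom{n}{k}u(n-k,a+(2k+1)c,b+(k+1)c,c),$$ and $A(n,k)=0$ whenever $n-k$ is odd. Then $$A(0,k)=[k=0],\qquad A(n,0)=T(0)A(n-1,1)\ (n\ge1),\qquad A(n,k)=A(n-1,k-1)+T(k)A(n-1,k+1)\ (n\ge1,\ k\ge1).$$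
   Context: $\binom{n}{k}$ is the ordinary binomial coefficient, equal to $0$ for $k<0$ or $k>n$. $[P]$ is $1$ if $P$ holds and $0$ otherwise. (For $n=0$ the factor $a-c$ cancels, so $T(0)=b/a$.) *)

theory Defs
  imports Complex_Main
begin

definition u :: "nat \<Rightarrow> 'a::field_char_0 \<Rightarrow> 'a \<Rightarrow> 'a \<Rightarrow> 'a" where
  "u n a b c = (\<Prod>j<n. b + of_nat j * c) / (\<Prod>j<n. a + of_nat j * c)"

definition ibinom :: "nat \<Rightarrow> int \<Rightarrow> nat" where
  "ibinom n k = (if k < 0 then 0 else n choose nat k)"

text \<open>T(0) = b/a (the factor a - c cancels); T(2n), T(2n+1) as in the paper.\<close>
definition T :: "'a::field_char_0 \<Rightarrow> 'a \<Rightarrow> 'a \<Rightarrow> nat \<Rightarrow> 'a" where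
  "T a b c k =
    (if k = 0 then b / a
     else if even k then
       (let n = k div 2 in
         ((a + (of_nat n - 1) * c) * (b + of_nat n * c)) /
         ((a + 2 * of_nat n * c) * (a + (2 * of_nat n - 1) * c)))
     else
       (let n = k div 2 in
         ((of_nat n + 1) * c * (a - b + of_nat n * c)) /
         ((a + 2 * of_nat n * c) * (a + (2 * of_nat n + 1) * c))))"

definition A :: "'a::field_char_0 \<Rightarrow> 'a \<Rightarrow> 'a \<Rightarrow> nat \<Rightarrow> int \<Rightarrow> 'a" where
  "A a b c n k =
    (if odd (int n - k) then 0
     else if even n then
       (let m = n div 2; l = k div 2 in
         of_nat (ibinom m l) *
         u (nat (int m - l)) (a + 2 * of_int l * c) (b + of_int l * c) c)
     else
       (let m = n div 2; l = (k - 1) div 2 in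
         of_nat (ibinom m l) *
         u (nat (int m - l)) (a + (2 * of_int l + 1) * c) (b + (of_int l + 1) * c) c))"

end

theory Submission
  imports Defs
begin

text \<open>Write \<open>x = C(m,l)\<close> and \<open>y = C(m,l+1)\<close>. Peeling one factor off the rising products
  (at the front or at the back, and shifting the denominator by \<open>c\<close> where necessary)
  turns the three \<open>u\<close>-terms of each recurrence into rational multiples of one common
  \<open>u\<close>-value. After cancelling it, each recurrence becomes a linear identity in \<open>x\<close> and
  \<open>y\<close> that is equivalent to \<open>(m - l) x = (l + 1) y\<close>, together with Pascal's rule in
  the even case.\<close>

lemma u_0 [simp]: "u 0 x y c = 1"
  by (simp add: u_def)

lemma u_Suc: "u (Suc n) x y c = y / x * u n (x + c) (y + c) c"
  unfolding u_def prod.lessThan_Suc_shift by (simp add: algebra_simps)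

lemma u_Suc_last: "u (Suc n) x y c = u n x y c * ((y + of_nat n * c) / (x + of_nat n * c))"
  by (simp add: u_def)

lemma u_shift_denominator:
  assumes "x \<noteq> 0" "x + of_nat n * c \<noteq> 0"
  shows "u n x y c = (x + of_nat n * c) / x * u n (x + c) y c"
proof -
  define Y where "Y = (\<Prod>j<n. y + of_nat j * c)"
  define P where "P = (\<Prod>j<n. x + of_nat j * c)"
  define Q where "Q = (\<Prod>j<n. x + c + of_nat j * c)"
  have "P * (x + of_nat n * c) = (\<Prod>j<Suc n. x + of_nat j * c)"
    by (simp add: P_def)
  also have "\<dots> = x * Q"
    unfolding Q_def prod.lessThan_Suc_shift by (simp add: algebra_simps)
  finally have P: "P = x * Q / (x + of_nat n * c)"
    using assms(2) by (simp add: field_simps)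
  have "Y / P = (x + of_nat n * c) / x * (Y / Q)"
    unfolding P using assms by (simp add: field_simps)
  then show ?thesis
    by (simp add: u_def Y_def P_def Q_def)
qed

lemma A_even: "A a b c (2 * m) (2 * int l) =
    of_nat (m choose l) * u (m - l) (a + 2 * of_nat l * c) (b + of_nat l * c) c"
  by (cases "l \<le> m") (simp_all add: A_def ibinom_def nat_diff_distrib)

lemma A_odd: "A a b c (2 * m + 1) (2 * int l + 1) =
    of_nat (m choose l) * u (m - l) (a + (2 * of_nat l + 1) * c) (b + (of_nat l + 1) * c) c"
  by (cases "l \<le> m") (simp_all add: A_def ibinom_def nat_diff_distrib)

lemma A_eq_0_if_odd: "odd (int n - k) \<Longrightarrow> A a b c n k = 0"
  by (simp add: A_def)

lemma T_even_Suc: "T a b c (2 * Suc l) = (a + of_nat l * c) * (b + (of_nat l + 1) * c) /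
    ((a + (2 * of_nat l + 2) * c) * (a + (2 * of_nat l + 1) * c))"
  by (simp add: T_def algebra_simps)

lemma T_odd: "T a b c (2 * l + 1) = (of_nat l + 1) * c * (a - b + of_nat l * c) /
    ((a + 2 * of_nat l * c) * (a + (2 * of_nat l + 1) * c))"
  by (simp add: T_def algebra_simps)

lemma of_nat_binomial_absorb:
  "(of_nat (m choose k) * of_nat (m - k) :: 'a::comm_semiring_1) = of_nat (m choose Suc k) * of_nat (Suc k)"
proof -
  have "(m choose k) * (m - k) = (m choose Suc k) * Suc k"
    by (metis binomial_absorb_comp binomial_absorption mult.commute)
  then have "(of_nat ((m choose k) * (m - k)) :: 'a) = of_nat ((m choose Suc k) * Suc k)"
    by (rule arg_cong)
  then show ?thesis
    by (simp only: of_nat_mult)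
qed

lemma A_rec_even:
  fixes a b c :: "'a::field_char_0"
  assumes nz: "\<And>m::nat. a + of_nat m * c \<noteq> 0"
  shows "A a b c (2 * Suc M) (2 * int (Suc l)) =
    A a b c (2 * M + 1) (2 * int l + 1) + T a b c (2 * Suc l) * A a b c (2 * M + 1) (2 * int (Suc l) + 1)"
proof (cases "M \<le> l")
  case True
  then show ?thesis unfolding A_even A_odd by simp
next
  case False
  then obtain N where "M = l + Suc N"
    by (metis add_Suc_right less_imp_Suc_add not_le)
  then have diff: "Suc M - Suc l = Suc N" "M - l = Suc N" "M - Suc l = N"
    by simp_all
  define x :: 'a where "x = of_nat (M choose l)"
  define y :: 'a where "y = of_nat (M choose Suc l)"
  define U where "U = u N (a + (2 * of_nat l + 3) * c) (b + (of_nat l + 2) * c) c"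
  define D1 where "D1 = a + (2 * of_nat l + 1) * c"
  define D2 where "D2 = a + (2 * of_nat l + 2) * c"
  define W where "W = D2 + of_nat N * c"
  define B where "B = b + (of_nat l + 1) * c"
  have D1: "D1 \<noteq> 0" using nz[of "2 * l + 1"] by (simp add: D1_def algebra_simps)
  have D2: "D2 \<noteq> 0" using nz[of "2 * l + 2"] by (simp add: D2_def algebra_simps)
  have W: "W \<noteq> 0" using nz[of "2 * l + 2 + N"] by (simp add: W_def D2_def algebra_simps)
  have binom: "x * (of_nat N + 1) = y * (of_nat l + 1)"
    using of_nat_binomial_absorb[of M l] by (simp add: x_def y_def diff add.commute)
  have lhs: "A a b c (2 * Suc M) (2 * int (Suc l)) = (x + y) * (B / D2 * U)"
    unfolding A_even diff u_Suc by (simp add: x_def y_def U_def B_def D2_def algebra_simps)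
  have "D2 + c = a + (2 * of_nat l + 3) * c" "B + c = b + (of_nat l + 2) * c"
    by (simp_all add: D2_def B_def algebra_simps)
  then have "u N D2 (B + c) c = W / D2 * U"
    unfolding U_def W_def using u_shift_denominator[OF D2 W[unfolded W_def], of "B + c"] by simp
  then have rhs1: "A a b c (2 * M + 1) (2 * int l + 1) = x * (B / D1 * (W / D2 * U))"
    unfolding A_odd diff u_Suc by (simp add: x_def B_def D1_def D2_def algebra_simps)
  have rhs2: "A a b c (2 * M + 1) (2 * int (Suc l) + 1) = y * U"
    unfolding A_odd diff by (simp add: y_def U_def algebra_simps)
  have T: "T a b c (2 * Suc l) = (a + of_nat l * c) * B / (D2 * D1)"
    unfolding D1_def D2_def B_def by (rule T_even_Suc)
  have "(x + y) * D1 - (x * W + (a + of_nat l * c) * y) =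
      c * (y * (of_nat l + 1) - x * (of_nat N + 1))"
    by (simp add: D1_def D2_def W_def algebra_simps)
  then have key: "x * W + (a + of_nat l * c) * y = (x + y) * D1"
    using binom by simp
  have "x * (B / D1 * (W / D2 * U)) + T a b c (2 * Suc l) * (y * U) =
      B * U / (D1 * D2) * (x * W + (a + of_nat l * c) * y)"
    unfolding T using D1 D2 by (simp add: field_simps)
  also have "\<dots> = (x + y) * (B / D2 * U)"
    unfolding key using D1 D2 by (simp add: field_simps)
  finally show ?thesis
    unfolding lhs rhs1 rhs2 by simp
qed

lemma A_rec_odd:
  fixes a b c :: "'a::field_char_0"
  assumes nz: "\<And>m::nat. a + of_nat m * c \<noteq> 0"
  shows "A a b c (2 * m + 1) (2 * int l + 1) =
    A a b c (2 * m) (2 * int l) + T a b c (2 * l + 1) * A a b c (2 * m) (2 * int (Suc l))"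
proof (cases "m \<le> l")
  case True
  then show ?thesis unfolding A_even A_odd by simp
next
  case False
  then obtain N where "m = l + Suc N"
    by (metis add_Suc_right less_imp_Suc_add not_le)
  then have diff: "m - l = Suc N" "m - Suc l = N"
    by simp_all
  define x :: 'a where "x = of_nat (m choose l)"
  define y :: 'a where "y = of_nat (m choose Suc l)"
  define D0 where "D0 = a + 2 * of_nat l * c"
  define D1 where "D1 = a + (2 * of_nat l + 1) * c"
  define W where "W = D1 + of_nat N * c"
  define B where "B = b + (of_nat l + 1) * c"
  define K where "K = (of_nat l + 1) * c * (a - b + of_nat l * c)"
  define U where "U = u N D1 B c"
  have D0: "D0 \<noteq> 0" using nz[of "2 * l"] by (simp add: D0_def algebra_simps)
  have D1: "D1 \<noteq> 0" using nz[of "2 * l + 1"] by (simp add: D1_def algebra_simps)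
  have W: "W \<noteq> 0" using nz[of "2 * l + 1 + N"] by (simp add: W_def D1_def algebra_simps)
  have binom: "x * (of_nat N + 1) = y * (of_nat l + 1)"
    using of_nat_binomial_absorb[of m l] by (simp add: x_def y_def diff add.commute)
  have lhs: "A a b c (2 * m + 1) (2 * int l + 1) = x * (U * ((B + of_nat N * c) / W))"
    unfolding A_odd diff u_Suc_last by (simp add: x_def U_def D1_def B_def W_def)
  have rhs1: "A a b c (2 * m) (2 * int l) = x * ((b + of_nat l * c) / D0 * U)"
    unfolding A_even diff u_Suc by (simp add: x_def U_def D0_def D1_def B_def algebra_simps)
  have "D1 + c = a + 2 * of_nat (Suc l) * c" "B = b + of_nat (Suc l) * c"
    by (simp_all add: D1_def B_def algebra_simps)
  then have "U = W / D1 * u N (a + 2 * of_nat (Suc l) * c) (b + of_nat (Suc l) * c) c"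
    unfolding U_def W_def using u_shift_denominator[OF D1 W[unfolded W_def], of B] by simp
  then have rhs2: "A a b c (2 * m) (2 * int (Suc l)) = y * (D1 / W * U)"
    unfolding A_even diff using D1 W by (simp add: y_def)
  have T: "T a b c (2 * l + 1) = K / (D0 * D1)"
    unfolding D0_def D1_def K_def by (rule T_odd)
  have "x * (B + of_nat N * c) * D0 - (x * (b + of_nat l * c) * W + K * y) =
      c * (a - b + of_nat l * c) * (x * (of_nat N + 1) - y * (of_nat l + 1))"
    by (simp add: D0_def D1_def B_def W_def K_def algebra_simps)
  then have key: "x * (b + of_nat l * c) * W + K * y = x * (B + of_nat N * c) * D0"
    using binom by simp
  have "x * ((b + of_nat l * c) / D0 * U) + K / (D0 * D1) * (y * (D1 / W * U)) =
      U / (D0 * W) * (x * (b + of_nat l * c) * W + K * y)"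
    using D0 D1 W by (simp add: field_simps)
  also have "\<dots> = x * (U * ((B + of_nat N * c) / W))"
    unfolding key using D0 W by (simp add: field_simps)
  finally show ?thesis
    unfolding lhs rhs1 rhs2 T by simp
qed

lemma A_rec_zero: "A a b c (2 * Suc m) 0 = T a b c 0 * A a b c (2 * m + 1) 1"
  using A_even[of a b c "Suc m" 0] A_odd[of a b c m 0] by (simp add: u_Suc T_def)

lemma A_0: "A a b c 0 k = (if k = 0 then 1 else 0)"
  by (auto simp: A_def ibinom_def)

lemma pos_nat_parity_cases:
  fixes n :: nat
  assumes "n \<ge> 1"
  obtains (even) m where "n = 2 * Suc m" | (odd) m where "n = 2 * m + 1"
proof (cases "even n")
  case True
  then obtain m' where "n = 2 * m'" by (rule evenE)
  with assms that(1) show ?thesis by (cases m') auto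
next
  case False
  then show ?thesis using that(2) by (blast elim: oddE)
qed

lemma A_rec:
  fixes a b c :: "'a::field_char_0"
  assumes nz: "\<And>m::nat. a + of_nat m * c \<noteq> 0" and "n \<ge> 1" "k \<ge> 1"
  shows "A a b c n (int k) = A a b c (n - 1) (int k - 1) + T a b c k * A a b c (n - 1) (int k + 1)"
proof (cases "odd (int n - int k)")
  case True
  then show ?thesis using assms(2) by (simp add: A_eq_0_if_odd)
next
  case False
  show ?thesis
  proof (cases rule: pos_nat_parity_cases[OF \<open>n \<ge> 1\<close>];
      cases rule: pos_nat_parity_cases[OF \<open>k \<ge> 1\<close>])
    fix M l assume "n = 2 * Suc M" "k = 2 * Suc l"
    then show ?thesis using A_rec_even[OF nz, of b M l] by (simp add: algebra_simps)
  next
    fix m l assume "n = 2 * m + 1" "k = 2 * l + 1"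
    then show ?thesis using A_rec_odd[OF nz, of b m l] by (simp add: algebra_simps)
  qed (use False in simp_all)
qed

theorem corollary1:
  fixes a b c :: "'a::field_char_0"
  assumes nz: "\<And>m::nat. a + of_nat m * c \<noteq> 0"
  shows "(\<forall>k::int. A a b c 0 k = (if k = 0 then 1 else 0))
    \<and> (\<forall>n::nat. n \<ge> 1 \<longrightarrow> A a b c n 0 = T a b c 0 * A a b c (n - 1) 1)
    \<and> (\<forall>(n::nat) (k::nat). n \<ge> 1 \<longrightarrow> k \<ge> 1 \<longrightarrow>
          A a b c n (int k) = A a b c (n - 1) (int k - 1) + T a b c k * A a b c (n - 1) (int k + 1))"
proof (intro conjI allI impI)
  fix n :: nat
  assume "n \<ge> 1"
  then show "A a b c n 0 = T a b c 0 * A a b c (n - 1) 1"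
  proof (cases rule: pos_nat_parity_cases)
    case (even m)
    then show ?thesis using A_rec_zero[of a b c m] by simp
  qed (simp add: A_eq_0_if_odd)
qed (simp_all add: A_0 A_rec nz)

end
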